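(* Let $\pi_1\in\mathfrak{S}_k$ and $\pi_2\in\mathfrak{S}_\ell$ be non-empty permutations and $1\le i\le\operatorname{slmax}(\pi_2)$. Then \begin{align*} \operatorname{lmax}(C_1(\pi_1,\pi_2))=\operatorname{lmax}(C_2(\pi_1,\pi_2,i))&=\operatorname{lmax}(\pi_1)+1,\\ \operatorname{rmax}(C_1(\pi_1,\pi_2))=\operatorname{rmax}(C_2(\pi_1,\pi_2,i))&=1+\operatorname{rmax}(\pi_2),\\ \operatorname{asc}(C_1(\pi_1,\pi_2))=\operatorname{asc}(C_2(\pi_1,\pi_2,i))&=\operatorname{asc}(\pi_1)+1+\operatorname{asc}(\pi_2),\\ \operatorname{des}(C_1(\pi_1,\pi_2))=\operatorname{des}(C_2(\pi_1,\pi_2,i))&=\operatorname{des}(\pi_1)+1+\operatorname{des}(\pi_2),\\ \operatorname{len}(C_1(\pi_1,\pi_2))=\operatorname{len}(C_2(\pi_1,\pi_2,i))&=\operatorname{len}(\pi_1)+1+\operatorname{len}(\pi_2),\\ \operatorname{sldes}(C_1(\pi_1,\pi_2))&=\operatorname{sldes}(\pi_1)+\operatorname{sldes}(\pi_2),\\ \operatorname{sldes}(C_2(\pi_1,\pi_2,i))&=\operatorname{sldes}(\pi_1)+\operatorname{sldes}(\pi_2)+1. \end{align*} Furthermore, when one of $\pi_1,\pi_2$ is empty, the formulas for $C_1(\pi_1,\pi_2)$ still hold, except that $\operatorname{asc}(C_1(\epsilon,\pi_2))=\operatorname{asc}(\pi_2)$ and $\operatorname{des}(C_1(\pi_1,\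epsilon))=\operatorname{des}(\pi_1)$.
   Context: For a finite sequence $A$ of distinct integers, the stack-sorting operator $\mathcal{S}$ is defined by $\mathcal{S}(\epsilon)=\epsilon$ for the empty sequence and, if $A$ is non-empty with largest element $m$, writing $A=A_L\cdot(m)\cdot A_R$ (concatenation), $\mathcal{S}(A)=\mathcal{S}(A_L)\cdot\mathcal{S}(A_R)\cdot(m)$. Permutations are viewed as sequences. For a sequence $\tau$: $\tau^{+k}$ adds $k$ to each element; for $k_1<k_2$, $\tau^{+(k_1,m,k_2)}$ adds $k_1$ to elements strictly smaller than $m$ and $k_2$ to the others. For a permutation $\sigma$: $\operatorname{len}(\sigma)$ is its length; $\operatorname{lmax}(\sigma)$ (resp. $\operatorname{rmax}(\sigma)$) is the number of indices $i$ with $\sigma(i)>\sigma(j)$ for all $j<i$ (resp. all $j>i$); $\operatorname{asc}(\sigma)$ (resp. $\operatorname{des}(\sigma)$) is the number of indices $i$ with $\sigma(i)<\sigma(i+1)$ (resp. $\sigma(i)>\sigma(i+1)$); $\operatorname{slmax}(\sigma)$ is the number of left-to-right maxima of $\mathcal{S}(\sigma)$; $\operatorname{sldes}(\sigma)$ is the number of elements $a$ such that $a$ precedes $a-1$ in $\mathcal{S}(\sigma)$. All these statistics are $0$ on the empty permutation $\epsilon$. For permutations $\pi_1\in\mathfrak{S}_k$, $\pi_2\in\mathfrak{S}_\ell$ (possibly empty, $\mathfrak{S}_0=\{\epsilon\}$), $C_1(\pi_1,\pi_2)=\pi_1\cdot(k+\ell+1)\cdot\pi_2^{+k}$; for non-empty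 $\pi_1,\pi_2$, with $a_1,\dots,a_t$ the values of the left-to-right maxima of $\mathcal{S}(\pi_2)$ in order and $1\le i\le t$, $C_2(\pi_1,\pi_2,i)=\pi_1^{+(0,k,a_i)}\cdot(k+\ell+1)\cdot\pi_2^{+(k-1,a_i+1,k)}$. *)

theory Defs
  imports Main
begin

definition is_perm :: "nat list \<Rightarrow> bool" where
  "is_perm \<sigma> \<longleftrightarrow> distinct \<sigma> \<and> set \<sigma> = {1..length \<sigma>}"

text \<open>Stack-sorting operator: S(A_L m A_R) = S(A_L) S(A_R) m, m the maximum.\<close>

function stack_sort :: "nat list \<Rightarrow> nat list" where
  "stack_sort [] = []"
| "stack_sort (x # xs) =
     (let ys = x # xs; m = Max (set ys);
          L = takeWhile (\<lambda>y. y \<noteq> m) ys;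
          R = tl (dropWhile (\<lambda>y. y \<noteq> m) ys)
      in stack_sort L @ stack_sort R @ [m])"
  by pat_completeness auto
termination
proof (relation "measure length")
  fix x :: nat and xs ys m L
  assume ys: "ys = x # xs" and m: "m = Max (set ys)"
     and L: "L = takeWhile (\<lambda>y. y \<noteq> m) ys"
  have "m \<in> set ys" using ys m by (metis Max_in finite_set list.set_intros(1) empty_iff)
  then show "(L, x # xs) \<in> measure length"
    using L ys takeWhile_eq_all_conv[of "\<lambda>y. y \<noteq> m" ys]
          length_takeWhile_le[of "\<lambda>y. y \<noteq> m" ys]
    by (metis (mono_tags, lifting) in_measure le_neq_implies_less takeWhile_eq_take take_all_iff)
next
  fix x :: nat and xs ys m R
  assume ys: "ys = x # xs"
     and R: "R = tl (dropWhile (\<lambda>y. y \<noteq> m) ys)"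
  have "length (dropWhile (\<lambda>y. y \<noteq> m) ys) \<le> length ys"
    by (simp add: length_dropWhile_le)
  then show "(R, x # xs) \<in> measure length"
    using R ys by simp
qed simp

definition shift :: "nat \<Rightarrow> nat list \<Rightarrow> nat list" where
  "shift k \<tau> = map (\<lambda>x. x + k) \<tau>"

definition shift3 :: "nat \<Rightarrow> nat \<Rightarrow> nat \<Rightarrow> nat list \<Rightarrow> nat list" where
  "shift3 k1 m k2 \<tau> = map (\<lambda>x. if x < m then x + k1 else x + k2) \<tau>"

text \<open>Statistics (lists are 0-indexed here).\<close>

definition lmax :: "nat list \<Rightarrow> nat" where
  "lmax \<sigma> = card {i. i < length \<sigma> \<and> (\<forall>j<i. \<sigma> ! j < \<sigma> ! i)}"

definition rmax :: "nat list \<Rightarrow> nat" where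
  "rmax \<sigma> = card {i. i < length \<sigma> \<and> (\<forall>j. i < j \<and> j < length \<sigma> \<longrightarrow> \<sigma> ! j < \<sigma> ! i)}"

definition asc :: "nat list \<Rightarrow> nat" where
  "asc \<sigma> = card {i. Suc i < length \<sigma> \<and> \<sigma> ! i < \<sigma> ! Suc i}"

definition des :: "nat list \<Rightarrow> nat" where
  "des \<sigma> = card {i. Suc i < length \<sigma> \<and> \<sigma> ! i > \<sigma> ! Suc i}"

definition slmax :: "nat list \<Rightarrow> nat" where
  "slmax \<sigma> = lmax (stack_sort \<sigma>)"

definition sldes :: "nat list \<Rightarrow> nat" where
  "sldes \<sigma> = (let s = stack_sort \<sigma> in
     card {a. \<exists>i j. i < j \<and> j < length s \<and> s ! i = a \<and> s ! j = a - 1})"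

definition lmax_vals :: "nat list \<Rightarrow> nat list" where
  "lmax_vals s = [s ! i. i \<leftarrow> [0..<length s], \<forall>j<i. s ! j < s ! i]"

definition C1 :: "nat list \<Rightarrow> nat list \<Rightarrow> nat list" where
  "C1 \<pi>1 \<pi>2 = \<pi>1 @ [length \<pi>1 + length \<pi>2 + 1] @ shift (length \<pi>1) \<pi>2"

text \<open>C2 with 1-based index i: a_i = lmax_vals (S pi2) ! (i - 1).\<close>

definition C2 :: "nat list \<Rightarrow> nat list \<Rightarrow> nat \<Rightarrow> nat list" where
  "C2 \<pi>1 \<pi>2 i = (let k = length \<pi>1; l = length \<pi>2;
                      a = lmax_vals (stack_sort \<pi>2) ! (i - 1)
                  in shift3 0 k a \<pi>1 @ [k + l + 1] @ shift3 (k - 1) (a + 1) k \<pi>2)"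

end

theory Submission
  imports Defs
begin

text \<open>Both constructions have the shape \<open>X @ n # Y\<close> with \<open>n\<close> larger than every other entry,
  \<open>X\<close> an order-isomorphic copy of \<open>\<pi>1\<close> and \<open>Y\<close> one of \<open>\<pi>2\<close>. Left-to-right maxima are then those of
  \<open>X\<close> plus \<open>n\<close>, right-to-left maxima are \<open>n\<close> plus those of \<open>Y\<close>, and \<open>n\<close> contributes exactly one
  ascent (if \<open>X\<close> is non-empty) and one descent (if \<open>Y\<close> is non-empty). Stack-sorting splits at
  the maximum, so \<open>S(X @ n # Y) = S(X) @ S(Y) @ [n]\<close>, and \<open>S\<close> commutes with order-preserving
  relabelling. Counting values \<open>a\<close> that precede \<open>a - 1\<close> in this word, the pairs inside \<open>S(X)\<close> and
  inside \<open>S(Y)\<close> are those of \<open>S(\<pi>1)\<close> and \<open>S(\<pi>2)\<close>, because the relabellings only fail to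
  preserve \<open>a - 1\<close> at pairs that do not occur in that order: the value \<open>k\<close> is last in \<open>S(\<pi>1)\<close>,
  and \<open>a\<^sub>i + 1\<close> cannot precede the left-to-right maximum \<open>a\<^sub>i\<close> of \<open>S(\<pi>2)\<close>. The only mixed pair
  is \<open>k + a\<^sub>i\<close> (from \<open>S(\<pi>1)\<close>) before \<open>k + a\<^sub>i - 1\<close> (from \<open>S(\<pi>2)\<close>), which exists for \<open>C2\<close>
  but not for \<open>C1\<close>.\<close>

lemma card_nat_Suc_split:
  assumes "finite {i::nat. P i}"
  shows "card {i. P i} = (if P 0 then 1 else 0) + card {i. P (Suc i)}"
proof -
  have eq: "{i. P i} = (if P 0 then {0} else {}) \<union> Suc ` {i. P (Suc i)}"
    by (auto simp: image_iff) (metis not0_implies_Suc)+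
  have "finite {i. P (Suc i)}"
    using finite_vimageI[OF assms, of Suc] by (simp add: vimage_def)
  then have "card {i. P i} = card (if P 0 then {0::nat} else {}) + card (Suc ` {i. P (Suc i)})"
    unfolding eq by (intro card_Un_disjoint) auto
  also have "card (Suc ` {i. P (Suc i)}) = card {i. P (Suc i)}"
    by (rule card_image) simp
  finally show ?thesis by simp
qed

lemma card_less_Suc_split:
  "card {i::nat. i < Suc m \<and> Q i} = card {i. i < m \<and> Q i} + (if Q m then 1 else 0)"
proof -
  have "{i. i < Suc m \<and> Q i} = {i. i < m \<and> Q i} \<union> (if Q m then {m} else {})"
    by (auto simp: less_Suc_eq)
  then show ?thesis by (simp add: card_Un_disjoint)
qed

lemma asc_Nil [simp]: "asc [] = 0"
  by (simp add: asc_def)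

lemma des_Nil [simp]: "des [] = 0"
  by (simp add: des_def)

lemma asc_Cons: "asc (x # s) = (if s \<noteq> [] \<and> x < hd s then 1 else 0) + asc s"
  unfolding asc_def by (subst card_nat_Suc_split) (auto simp: hd_conv_nth)

lemma des_Cons: "des (x # s) = (if s \<noteq> [] \<and> hd s < x then 1 else 0) + des s"
  unfolding des_def by (subst card_nat_Suc_split) (auto simp: hd_conv_nth)

lemma asc_append:
  "asc (X @ Y) = asc X + asc Y + (if X \<noteq> [] \<and> Y \<noteq> [] \<and> last X < hd Y then 1 else 0)"
  by (induction X) (auto simp: asc_Cons)

lemma des_append:
  "des (X @ Y) = des X + des Y + (if X \<noteq> [] \<and> Y \<noteq> [] \<and> hd Y < last X then 1 else 0)"
  by (induction X) (auto simp: des_Cons)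

lemma rmax_Cons: "rmax (x # s) = (if \<forall>y\<in>set s. y < x then 1 else 0) + rmax s"
proof -
  have shift_index: "(\<forall>j. Suc i < j \<and> j < Suc n \<longrightarrow> Q j) \<longleftrightarrow> (\<forall>j. i < j \<and> j < n \<longrightarrow> Q (Suc j))"
    for i n and Q :: "nat \<Rightarrow> bool"
    by (metis Suc_less_eq less_Suc_eq_0_disj not_less0)
  have head: "(\<forall>j. 0 < j \<and> j < Suc (length s) \<longrightarrow> (x # s) ! j < x) \<longleftrightarrow> (\<forall>y\<in>set s. y < x)"
    by (auto simp: all_set_conv_all_nth)
  show ?thesis
    unfolding rmax_def
    by (subst card_nat_Suc_split)
       (simp_all only: head shift_index length_Cons nth_Cons_0 nth_Cons_Suc Suc_less_eq simp_thms,
        simp_all)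
qed

lemma lmax_snoc: "lmax (s @ [x]) = lmax s + (if \<forall>y\<in>set s. y < x then 1 else 0)"
proof -
  have "lmax (s @ [x]) = card {i. i < length s \<and> (\<forall>j<i. (s @ [x]) ! j < (s @ [x]) ! i)}
      + (if \<forall>y\<in>set s. y < x then 1 else 0)"
    unfolding lmax_def
    by (subst length_append_singleton, subst card_less_Suc_split)
       (auto simp: nth_append all_set_conv_all_nth)
  also have "{i. i < length s \<and> (\<forall>j<i. (s @ [x]) ! j < (s @ [x]) ! i)}
      = {i. i < length s \<and> (\<forall>j<i. s ! j < s ! i)}"
    by (auto simp: nth_append)
  finally show ?thesis by (simp add: lmax_def)
qed

lemma lmax_append_peak:
  assumes "\<forall>x\<in>set X \<union> set Y. x < n"
  shows "lmax (X @ n # Y) = lmax X + 1"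
  using assms
proof (induction Y rule: rev_induct)
  case Nil
  then show ?case by (simp add: lmax_snoc)
next
  case (snoc y Y)
  then show ?case using lmax_snoc[of "X @ n # Y" y] by auto
qed

lemma rmax_append_peak:
  assumes "\<forall>x\<in>set X \<union> set Y. x < n"
  shows "rmax (X @ n # Y) = 1 + rmax Y"
  using assms by (induction X) (auto simp: rmax_Cons)

lemma asc_append_peak:
  assumes "\<forall>x\<in>set X \<union> set Y. x < n"
  shows "asc (X @ n # Y) = asc X + (if X = [] then 0 else 1) + asc Y"
proof -
  have "Y \<noteq> [] \<Longrightarrow> hd Y < n" and "X \<noteq> [] \<Longrightarrow> last X < n"
    using assms by auto
  then show ?thesis using asc_append[of X "n # Y"] by (auto simp: asc_Cons)
qed

lemma des_append_peak:
  assumes "\<forall>x\<in>set X \<union> set Y. x < n"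
  shows "des (X @ n # Y) = des X + (if Y = [] then 0 else 1) + des Y"
proof -
  have "Y \<noteq> [] \<Longrightarrow> hd Y < n" and "X \<noteq> [] \<Longrightarrow> last X < n"
    using assms by auto
  then show ?thesis using des_append[of X "n # Y"] by (auto simp: des_Cons)
qed

lemma lmax_map_strict_mono: "strict_mono f \<Longrightarrow> lmax (map f s) = lmax s"
  unfolding lmax_def by (intro arg_cong[where f=card] Collect_cong) (auto simp: strict_mono_less)

lemma rmax_map_strict_mono: "strict_mono f \<Longrightarrow> rmax (map f s) = rmax s"
  unfolding rmax_def by (intro arg_cong[where f=card] Collect_cong) (auto simp: strict_mono_less)

lemma asc_map_strict_mono: "strict_mono f \<Longrightarrow> asc (map f s) = asc s"
  unfolding asc_def by (intro arg_cong[where f=card] Collect_cong) (auto simp: strict_mono_less)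

lemma des_map_strict_mono: "strict_mono f \<Longrightarrow> des (map f s) = des s"
  unfolding des_def by (intro arg_cong[where f=card] Collect_cong) (auto simp: strict_mono_less)

lemma strict_mono_shift3_fun:
  "k1 \<le> k2 \<Longrightarrow> strict_mono (\<lambda>x::nat. if x < m then x + k1 else x + k2)"
  by (auto simp: strict_mono_def)

subsection \<open>Stack-sorting\<close>

lemma stack_sort_append_Max:
  assumes "n \<notin> set A" and "\<forall>x\<in>set A \<union> set B. x \<le> n"
  shows "stack_sort (A @ n # B) = stack_sort A @ stack_sort B @ [n]"
proof -
  obtain y ys where yys: "A @ n # B = y # ys"
    by (cases A) auto
  have "Max (set (A @ n # B)) = n"
    using assms by (intro Max_eqI) auto
  moreover have "takeWhile (\<lambda>y. y \<noteq> n) (A @ n # B) = A"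
    using assms(1) by (subst takeWhile_append2) auto
  moreover have "dropWhile (\<lambda>y. y \<noteq> n) (A @ n # B) = n # B"
    using assms(1) by (subst dropWhile_append2) auto
  ultimately show ?thesis
    by (simp only: yys stack_sort.simps Let_def) (simp add: yys[symmetric])
qed

lemma stack_sort_append_peak:
  "\<forall>x\<in>set A \<union> set B. x < n \<Longrightarrow> stack_sort (A @ n # B) = stack_sort A @ stack_sort B @ [n]"
  by (rule stack_sort_append_Max) (auto dest: less_imp_le)

lemma max_split_induct [case_names Nil split]:
  fixes xs :: "'a::linorder list"
  assumes "P []"
    and "\<And>A m B. m \<notin> set A \<Longrightarrow> \<forall>x\<in>set A \<union> set B. x \<le> m \<Longrightarrow> P A \<Longrightarrow> P B \<Longrightarrow> P (A @ m # B)"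
  shows "P xs"
proof (induction xs rule: length_induct)
  case (1 xs)
  show ?case
  proof (cases "xs = []")
    case True
    with assms(1) show ?thesis by simp
  next
    case False
    then have "Max (set xs) \<in> set xs" by simp
    then obtain A B where AB: "xs = A @ Max (set xs) # B" "Max (set xs) \<notin> set A"
      by (metis split_list_first)
    have "set A \<union> set B \<subseteq> set xs"
      by (subst AB(1)) auto
    then have "\<forall>x\<in>set A \<union> set B. x \<le> Max (set xs)"
      by auto
    moreover have "length A < length xs" "length B < length xs"
      by (subst AB(1); simp)+
    then have "P A" "P B"
      using 1 by blast+
    ultimately show ?thesis
      using assms(2) AB by metis
  qed
qed

lemma set_stack_sort [simp]: "set (stack_sort xs) = set xs"
  by (induction xs rule: max_split_induct) (auto simp: stack_sort_append_Max)

lemma distinct_stack_sort: "distinct xs \<Longrightarrow> distinct (stack_sort xs)"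
  by (induction xs rule: max_split_induct) (auto simp: stack_sort_append_Max)

lemma stack_sort_map_strict_mono:
  assumes "strict_mono f"
  shows "stack_sort (map f xs) = map f (stack_sort xs)"
proof (induction xs rule: max_split_induct)
  case Nil
  show ?case by simp
next
  case (split A m B)
  have "f m \<notin> set (map f A)" and "\<forall>x\<in>set (map f A) \<union> set (map f B). x \<le> f m"
    using split.hyps assms by (auto simp: strict_mono_eq strict_mono_less_eq)
  then show ?case
    using split.hyps split.IH by (simp add: stack_sort_append_Max)
qed

lemma stack_sort_ends_with_Max:
  "xs \<noteq> [] \<Longrightarrow> \<exists>ys. stack_sort xs = ys @ [Max (set xs)]"
proof (induction xs rule: max_split_induct)
  case (split A m B)
  have "Max (set (A @ m # B)) = m"
    using split.hyps by (intro Max_eqI) auto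
  then show ?case
    using split.hyps by (simp add: stack_sort_append_Max)
qed simp

subsection \<open>Values preceding their predecessor\<close>

definition precedes :: "nat list \<Rightarrow> nat \<Rightarrow> nat \<Rightarrow> bool" where
  "precedes s a b \<longleftrightarrow> (\<exists>i j. i < j \<and> j < length s \<and> s ! i = a \<and> s ! j = b)"

text \<open>The number of descents of the inverse permutation.\<close>

definition ides :: "nat list \<Rightarrow> nat" where
  "ides s = card {a. precedes s a (a - 1)}"

lemma sldes_eq_ides_stack_sort: "sldes \<sigma> = ides (stack_sort \<sigma>)"
  by (simp add: sldes_def ides_def precedes_def Let_def)

lemma precedes_Nil [simp]: "\<not> precedes [] a b"
  by (simp add: precedes_def)

lemma precedes_Cons: "precedes (x # s) a b \<longleftrightarrow> (a = x \<and> b \<in> set s) \<or> precedes s a b"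
proof
  assume "precedes (x # s) a b"
  then obtain i j where ij: "i < j" "j < length (x # s)" "(x # s) ! i = a" "(x # s) ! j = b"
    by (auto simp: precedes_def)
  then obtain j' where j': "j = Suc j'" by (cases j) auto
  show "(a = x \<and> b \<in> set s) \<or> precedes s a b"
  proof (cases i)
    case 0
    then show ?thesis using ij j' by auto
  next
    case (Suc i')
    then have "precedes s a b"
      unfolding precedes_def using ij j' by (intro exI[of _ i'] exI[of _ j']) auto
    then show ?thesis ..
  qed
next
  assume "(a = x \<and> b \<in> set s) \<or> precedes s a b"
  then show "precedes (x # s) a b"
  proof
    assume "a = x \<and> b \<in> set s"
    then obtain j where "j < length s" "s ! j = b" "a = x" by (auto simp: in_set_conv_nth)
    then show ?thesis unfolding precedes_def by (intro exI[of _ 0] exI[of _ "Suc j"]) auto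
  next
    assume "precedes s a b"
    then obtain i j where "i < j" "j < length s" "s ! i = a" "s ! j = b"
      by (auto simp: precedes_def)
    then show ?thesis unfolding precedes_def by (intro exI[of _ "Suc i"] exI[of _ "Suc j"]) auto
  qed
qed

lemma precedes_append:
  "precedes (X @ Y) a b \<longleftrightarrow> precedes X a b \<or> precedes Y a b \<or> (a \<in> set X \<and> b \<in> set Y)"
  by (induction X) (auto simp: precedes_Cons)

lemma precedes_setD: "precedes s a b \<Longrightarrow> a \<in> set s \<and> b \<in> set s"
  by (auto simp: precedes_def)

lemma precedes_map: "precedes (map f s) c d \<longleftrightarrow> (\<exists>x y. precedes s x y \<and> c = f x \<and> d = f y)"
proof
  assume "precedes (map f s) c d"
  then obtain i j where "i < j" "j < length s" "f (s ! i) = c" "f (s ! j) = d"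
    by (auto simp: precedes_def)
  then show "\<exists>x y. precedes s x y \<and> c = f x \<and> d = f y"
    unfolding precedes_def by blast
next
  assume "\<exists>x y. precedes s x y \<and> c = f x \<and> d = f y"
  then obtain i j where "i < j" "j < length s" "c = f (s ! i)" "d = f (s ! j)"
    by (auto simp: precedes_def)
  then show "precedes (map f s) c d"
    unfolding precedes_def by (intro exI[of _ i] exI[of _ j]) simp
qed

lemma not_precedes_snoc_last:
  "m \<notin> set ys \<Longrightarrow> \<not> precedes (ys @ [m]) m y"
  by (auto simp: precedes_append precedes_Cons dest: precedes_setD)

lemma ides_map:
  assumes inj: "inj_on f (set s)"
    and pred: "\<And>x y. precedes s x y \<Longrightarrow> f x - 1 = f y \<longleftrightarrow> x - 1 = y"
  shows "ides (map f s) = ides s"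
proof -
  have "{c. precedes (map f s) c (c - 1)} = f ` {a. precedes s a (a - 1)}"
    using pred by (auto simp: precedes_map)
  moreover have "inj_on f {a. precedes s a (a - 1)}"
    using inj by (rule inj_on_subset) (auto dest: precedes_setD)
  ultimately show ?thesis
    unfolding ides_def by (simp add: card_image)
qed

lemma ides_append_snoc_peak:
  assumes disj: "set X \<inter> set Y = {}" and peak: "\<forall>x\<in>set X \<union> set Y. x < n"
  shows "ides (X @ Y @ [n]) = ides X + ides Y + card {a \<in> set X. a - 1 \<in> set Y}"
proof -
  have "a - 1 \<noteq> n" if "a \<in> set X \<union> set Y" for a
  proof -
    have "a < n" using peak that by blast
    then show ?thesis by linarith
  qed
  then have eq: "{a. precedes (X @ Y @ [n]) a (a - 1)} =
      ({a. precedes X a (a - 1)} \<union> {a. precedes Y a (a - 1)}) \<union> {a \<in> set X. a - 1 \<in> set Y}"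
    by (auto simp: precedes_append precedes_Cons)
  have fin: "finite {a. precedes s a (a - 1)}" for s
    by (rule finite_subset[of _ "set s"]) (auto dest: precedes_setD)
  have "{a. precedes X a (a - 1)} \<inter> {a. precedes Y a (a - 1)} = {}"
    and "({a. precedes X a (a - 1)} \<union> {a. precedes Y a (a - 1)}) \<inter> {a \<in> set X. a - 1 \<in> set Y} = {}"
    using disj by (auto dest: precedes_setD)
  then show ?thesis
    unfolding ides_def eq by (simp add: card_Un_disjoint fin del: One_nat_def)
qed

lemma lmax_vals_eq_map_filter:
  "lmax_vals s = map (nth s) (filter (\<lambda>i. \<forall>j<i. s ! j < s ! i) [0..<length s])"
proof -
  have "concat (map (\<lambda>x. if P x then [f x] else []) xs) = map f (filter P xs)"
    for P and f :: "nat \<Rightarrow> nat" and xs by (induction xs) auto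
  then show ?thesis unfolding lmax_vals_def .
qed

lemma length_lmax_vals: "length (lmax_vals s) = lmax s"
  unfolding lmax_vals_eq_map_filter lmax_def length_map length_filter_conv_card
  by (intro arg_cong[where f=card] Collect_cong) auto

lemma set_lmax_vals_subset: "set (lmax_vals s) \<subseteq> set s"
  by (auto simp: lmax_vals_def)

lemma not_precedes_lmax_vals:
  assumes "distinct s" and "a \<in> set (lmax_vals s)" and "a < b"
  shows "\<not> precedes s b a"
proof
  assume "precedes s b a"
  then obtain i j where ij: "i < j" "j < length s" "s ! i = b" "s ! j = a"
    by (auto simp: precedes_def)
  obtain p where p: "p < length s" "a = s ! p" "\<forall>q<p. s ! q < s ! p"
    using assms(2) unfolding lmax_vals_def by auto
  have "j = p" using ij p assms(1) nth_eq_iff_index_eq by metis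
  then show False using ij p assms(3) by fastforce
qed

lemma ides_stack_sort_C1:
  assumes "set S1 = {1..k}" and "set S2 = {1..l}"
  shows "ides (S1 @ shift k S2 @ [k + l + 1]) = ides S1 + ides S2"
proof -
  have "ides (shift k S2) = ides S2"
    unfolding shift_def by (rule ides_map) (auto simp: inj_on_def assms dest!: precedes_setD)
  moreover have "{a \<in> set S1. a - 1 \<in> set (shift k S2)} = {}"
    using assms by (auto simp: shift_def)
  moreover have "ides (S1 @ shift k S2 @ [k + l + 1]) =
      ides S1 + ides (shift k S2) + card {a \<in> set S1. a - 1 \<in> set (shift k S2)}"
    using assms by (intro ides_append_snoc_peak) (auto simp: shift_def)
  ultimately show ?thesis by simp
qed

lemma ides_stack_sort_C2:
  assumes S1: "set S1 = {1..k}" and S2: "set S2 = {1..l}" and "1 \<le> k" and a: "a \<in> {1..l}"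
    and last: "\<And>y. \<not> precedes S1 k y" and lmax: "\<not> precedes S2 (a + 1) a"
  shows "ides (shift3 0 k a S1 @ shift3 (k - 1) (a + 1) k S2 @ [k + l + 1]) = ides S1 + ides S2 + 1"
proof -
  define g where "g = (\<lambda>x::nat. if x < k then x + 0 else x + a)"
  define h where "h = (\<lambda>x::nat. if x < a + 1 then x + (k - 1) else x + k)"
  have smg: "strict_mono g" and smh: "strict_mono h"
    unfolding g_def h_def by (auto intro: strict_mono_shift3_fun)
  have "ides (map g S1) = ides S1"
  proof (rule ides_map)
    show "inj_on g (set S1)" using smg strict_mono_imp_inj_on inj_on_subset by blast
    fix x y assume "precedes S1 x y"
    moreover from this have "x \<noteq> k" using last by blast
    ultimately show "g x - 1 = g y \<longleftrightarrow> x - 1 = y"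
      using S1 by (auto simp: g_def dest!: precedes_setD)
  qed
  moreover have "ides (map h S2) = ides S2"
  proof (rule ides_map)
    show "inj_on h (set S2)" using smh strict_mono_imp_inj_on inj_on_subset by blast
    fix x y assume "precedes S2 x y"
    moreover from this have "\<not> (x = a + 1 \<and> y = a)" using lmax by blast
    ultimately show "h x - 1 = h y \<longleftrightarrow> x - 1 = y"
      using S2 a \<open>1 \<le> k\<close> by (auto simp: h_def dest!: precedes_setD)
  qed
  moreover have "{c \<in> set (map g S1). c - 1 \<in> set (map h S2)} = {g k}"
  proof -
    have "g k - 1 = h a" using \<open>1 \<le> k\<close> by (simp add: g_def h_def)
    moreover have "c = g k" if "x \<in> {1..k}" "y \<in> {1..l}" "c = g x" "c - 1 = h y" for c x y
      using that \<open>1 \<le> k\<close> by (cases "x < k") (auto simp: g_def h_def split: if_splits)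
    ultimately show ?thesis
      using S1 S2 a \<open>1 \<le> k\<close> by (auto simp: image_iff)
  qed
  moreover have "ides (map g S1 @ map h S2 @ [k + l + 1]) = ides (map g S1) + ides (map h S2)
      + card {c \<in> set (map g S1). c - 1 \<in> set (map h S2)}"
    using S1 S2 a \<open>1 \<le> k\<close> by (intro ides_append_snoc_peak) (auto simp: g_def h_def)
  ultimately show ?thesis
    unfolding shift3_def g_def h_def by simp
qed

lemma stats_C1:
  assumes "is_perm \<pi>1" and "is_perm \<pi>2"
  shows "lmax (C1 \<pi>1 \<pi>2) = lmax \<pi>1 + 1"
    and "rmax (C1 \<pi>1 \<pi>2) = 1 + rmax \<pi>2"
    and "asc (C1 \<pi>1 \<pi>2) = asc \<pi>1 + (if \<pi>1 = [] then 0 else 1) + asc \<pi>2"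
    and "des (C1 \<pi>1 \<pi>2) = des \<pi>1 + (if \<pi>2 = [] then 0 else 1) + des \<pi>2"
    and "length (C1 \<pi>1 \<pi>2) = length \<pi>1 + 1 + length \<pi>2"
    and "sldes (C1 \<pi>1 \<pi>2) = sldes \<pi>1 + sldes \<pi>2"
proof -
  define k l where "k = length \<pi>1" and "l = length \<pi>2"
  have set_\<pi>: "set \<pi>1 = {1..k}" "set \<pi>2 = {1..l}"
    using assms by (simp_all add: is_perm_def k_def l_def)
  have sm: "strict_mono (\<lambda>x::nat. x + k)"
    by (simp add: strict_mono_def)
  have C1: "C1 \<pi>1 \<pi>2 = \<pi>1 @ (k + l + 1) # map (\<lambda>x. x + k) \<pi>2"
    by (simp add: C1_def shift_def k_def l_def)
  have peak: "\<forall>x\<in>set \<pi>1 \<union> set (map (\<lambda>x. x + k) \<pi>2). x < k + l + 1"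
    using set_\<pi> by auto
  show "lmax (C1 \<pi>1 \<pi>2) = lmax \<pi>1 + 1"
    unfolding C1 using peak by (rule lmax_append_peak)
  show "rmax (C1 \<pi>1 \<pi>2) = 1 + rmax \<pi>2"
    unfolding C1 rmax_append_peak[OF peak] rmax_map_strict_mono[OF sm] ..
  show "asc (C1 \<pi>1 \<pi>2) = asc \<pi>1 + (if \<pi>1 = [] then 0 else 1) + asc \<pi>2"
    unfolding C1 asc_append_peak[OF peak] asc_map_strict_mono[OF sm] ..
  show "des (C1 \<pi>1 \<pi>2) = des \<pi>1 + (if \<pi>2 = [] then 0 else 1) + des \<pi>2"
    unfolding C1 des_append_peak[OF peak] des_map_strict_mono[OF sm] by simp
  show "length (C1 \<pi>1 \<pi>2) = length \<pi>1 + 1 + length \<pi>2"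
    unfolding C1 by (simp add: k_def)
  have "stack_sort (C1 \<pi>1 \<pi>2) = stack_sort \<pi>1 @ shift k (stack_sort \<pi>2) @ [k + l + 1]"
    unfolding C1 stack_sort_append_peak[OF peak] by (simp add: shift_def stack_sort_map_strict_mono[OF sm])
  then show "sldes (C1 \<pi>1 \<pi>2) = sldes \<pi>1 + sldes \<pi>2"
    unfolding sldes_eq_ides_stack_sort
    using ides_stack_sort_C1[of "stack_sort \<pi>1" k "stack_sort \<pi>2" l] set_\<pi> by simp
qed

lemma stats_C2:
  assumes "is_perm \<pi>1" and "is_perm \<pi>2" and "\<pi>1 \<noteq> []" and "1 \<le> i" and "i \<le> slmax \<pi>2"
  shows "lmax (C2 \<pi>1 \<pi>2 i) = lmax \<pi>1 + 1"
    and "rmax (C2 \<pi>1 \<pi>2 i) = 1 + rmax \<pi>2"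
    and "asc (C2 \<pi>1 \<pi>2 i) = asc \<pi>1 + 1 + asc \<pi>2"
    and "des (C2 \<pi>1 \<pi>2 i) = des \<pi>1 + 1 + des \<pi>2"
    and "length (C2 \<pi>1 \<pi>2 i) = length \<pi>1 + 1 + length \<pi>2"
    and "sldes (C2 \<pi>1 \<pi>2 i) = sldes \<pi>1 + sldes \<pi>2 + 1"
proof -
  define k l where "k = length \<pi>1" and "l = length \<pi>2"
  define a where "a = lmax_vals (stack_sort \<pi>2) ! (i - 1)"
  define g where "g = (\<lambda>x::nat. if x < k then x + 0 else x + a)"
  define h where "h = (\<lambda>x::nat. if x < a + 1 then x + (k - 1) else x + k)"
  have set_\<pi>: "set \<pi>1 = {1..k}" "set \<pi>2 = {1..l}"
    and distinct_\<pi>: "distinct \<pi>1" "distinct \<pi>2"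
    using assms by (simp_all add: is_perm_def k_def l_def)
  have "1 \<le> k"
    using assms(3) by (simp add: k_def Suc_leI)
  have a_lmax: "a \<in> set (lmax_vals (stack_sort \<pi>2))"
    unfolding a_def using assms(4,5) by (intro nth_mem) (simp add: length_lmax_vals slmax_def)
  then have "a \<in> {1..l}"
    using set_lmax_vals_subset set_\<pi> by fastforce
  have "\<not> precedes (stack_sort \<pi>2) (a + 1) a"
    using distinct_stack_sort[OF distinct_\<pi>(2)] a_lmax by (rule not_precedes_lmax_vals) simp
  moreover have "\<not> precedes (stack_sort \<pi>1) k y" for y
  proof -
    have "Max (set \<pi>1) = k"
      using set_\<pi> \<open>1 \<le> k\<close> by (auto intro: Max_eqI)
    then obtain ys where "stack_sort \<pi>1 = ys @ [k]"
      using stack_sort_ends_with_Max[OF assms(3)] by auto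
    moreover from this have "k \<notin> set ys"
      using distinct_stack_sort[OF distinct_\<pi>(1)] by simp
    ultimately show ?thesis by (simp add: not_precedes_snoc_last)
  qed
  ultimately have ides: "ides (shift3 0 k a (stack_sort \<pi>1) @ shift3 (k - 1) (a + 1) k (stack_sort \<pi>2)
      @ [k + l + 1]) = ides (stack_sort \<pi>1) + ides (stack_sort \<pi>2) + 1"
    using set_\<pi> \<open>1 \<le> k\<close> \<open>a \<in> {1..l}\<close> by (intro ides_stack_sort_C2) simp_all
  have smg: "strict_mono g" and smh: "strict_mono h"
    unfolding g_def h_def by (auto intro: strict_mono_shift3_fun)
  have C2: "C2 \<pi>1 \<pi>2 i = map g \<pi>1 @ (k + l + 1) # map h \<pi>2"
    by (simp add: C2_def Let_def shift3_def g_def h_def a_def k_def l_def)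
  have peak: "\<forall>x\<in>set (map g \<pi>1) \<union> set (map h \<pi>2). x < k + l + 1"
    using set_\<pi> \<open>a \<in> {1..l}\<close> by (auto simp: g_def h_def)
  show "lmax (C2 \<pi>1 \<pi>2 i) = lmax \<pi>1 + 1"
    unfolding C2 lmax_append_peak[OF peak] lmax_map_strict_mono[OF smg] ..
  show "rmax (C2 \<pi>1 \<pi>2 i) = 1 + rmax \<pi>2"
    unfolding C2 rmax_append_peak[OF peak] rmax_map_strict_mono[OF smh] ..
  show "asc (C2 \<pi>1 \<pi>2 i) = asc \<pi>1 + 1 + asc \<pi>2"
    unfolding C2 asc_append_peak[OF peak] asc_map_strict_mono[OF smg] asc_map_strict_mono[OF smh]
    using assms(3) by simp
  show "des (C2 \<pi>1 \<pi>2 i) = des \<pi>1 + 1 + des \<pi>2"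
    unfolding C2 des_append_peak[OF peak] des_map_strict_mono[OF smg] des_map_strict_mono[OF smh]
    using \<open>a \<in> {1..l}\<close> by (auto simp: l_def)
  show "length (C2 \<pi>1 \<pi>2 i) = length \<pi>1 + 1 + length \<pi>2"
    unfolding C2 by simp
  have "stack_sort (C2 \<pi>1 \<pi>2 i) = map g (stack_sort \<pi>1) @ map h (stack_sort \<pi>2) @ [k + l + 1]"
    unfolding C2 stack_sort_append_peak[OF peak]
    by (simp add: stack_sort_map_strict_mono[OF smg] stack_sort_map_strict_mono[OF smh])
  then show "sldes (C2 \<pi>1 \<pi>2 i) = sldes \<pi>1 + sldes \<pi>2 + 1"
    using ides unfolding sldes_eq_ides_stack_sort shift3_def g_def[symmetric] h_def[symmetric]
    by simp
qed

theorem proposition9: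
  fixes \<pi>1 \<pi>2 :: "nat list"
  assumes "is_perm \<pi>1" and "is_perm \<pi>2"
  shows "(\<pi>1 \<noteq> [] \<and> \<pi>2 \<noteq> [] \<longrightarrow>
           (\<forall>i. 1 \<le> i \<and> i \<le> slmax \<pi>2 \<longrightarrow>
              lmax (C1 \<pi>1 \<pi>2) = lmax \<pi>1 + 1 \<and> lmax (C2 \<pi>1 \<pi>2 i) = lmax \<pi>1 + 1 \<and>
              rmax (C1 \<pi>1 \<pi>2) = 1 + rmax \<pi>2 \<and> rmax (C2 \<pi>1 \<pi>2 i) = 1 + rmax \<pi>2 \<and>
              asc (C1 \<pi>1 \<pi>2) = asc \<pi>1 + 1 + asc \<pi>2 \<and>
              asc (C2 \<pi>1 \<pi>2 i) = asc \<pi>1 + 1 + asc \<pi>2 \<and>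
              des (C1 \<pi>1 \<pi>2) = des \<pi>1 + 1 + des \<pi>2 \<and>
              des (C2 \<pi>1 \<pi>2 i) = des \<pi>1 + 1 + des \<pi>2 \<and>
              length (C1 \<pi>1 \<pi>2) = length \<pi>1 + 1 + length \<pi>2 \<and>
              length (C2 \<pi>1 \<pi>2 i) = length \<pi>1 + 1 + length \<pi>2 \<and>
              sldes (C1 \<pi>1 \<pi>2) = sldes \<pi>1 + sldes \<pi>2 \<and>
              sldes (C2 \<pi>1 \<pi>2 i) = sldes \<pi>1 + sldes \<pi>2 + 1))
       \<and> (\<pi>1 = [] \<or> \<pi>2 = [] \<longrightarrow>
              lmax (C1 \<pi>1 \<pi>2) = lmax \<pi>1 + 1 \<and>
              rmax (C1 \<pi>1 \<pi>2) = 1 + rmax \<pi>2 \<and>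
              asc (C1 \<pi>1 \<pi>2) = (if \<pi>1 = [] then asc \<pi>2 else asc \<pi>1 + 1 + asc \<pi>2) \<and>
              des (C1 \<pi>1 \<pi>2) = (if \<pi>2 = [] then des \<pi>1 else des \<pi>1 + 1 + des \<pi>2) \<and>
              length (C1 \<pi>1 \<pi>2) = length \<pi>1 + 1 + length \<pi>2 \<and>
              sldes (C1 \<pi>1 \<pi>2) = sldes \<pi>1 + sldes \<pi>2)"
  using stats_C1[OF assms] stats_C2[OF assms] by auto

end
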